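(* Let $m\ge 2$ and let $n_1,\dots,n_m\ge 4$ be even integers. Then the partition dimension of the even chain cycle $\mathcal{C}(C_{n_1},\dots,C_{n_m})$ equals $3$.
   Context: Let $C_{n_1},\dots,C_{n_m}$ be pairwise disjoint cycles, $V(C_{n_i})=\{v^i_1,\dots,v^i_{n_i}\}$ with $v^i_j$ adjacent to $v^i_{j+1}$ (indices mod $n_i$). The even chain cycle $\mathcal{C}(C_{n_1},\dots,C_{n_m})$ (all $n_i$ even) is obtained from the disjoint union of these cycles by identifying $v^i_{n_i/2+1}$ with $v^{i+1}_1$ for each $i=1,\dots,m-1$. For an ordered partition $\Pi=\{Q_1,\dots,Q_k\}$ of $V(G)$, $r(v\mid\Pi)=(d(v,Q_1),\dots,d(v,Q_k))$ where $d(v,Q)=\min_{q\in Q}d(v,q)$; $\Pi$ is resolving if distinct vertices have distinct representations; the partition dimension $pd(G)$ is the minimum $k$ for which a resolving $k$-partition exists. *)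

theory Defs
  imports Main
begin

definition is_walk :: "'a set \<Rightarrow> ('a \<Rightarrow> 'a \<Rightarrow> bool) \<Rightarrow> 'a list \<Rightarrow> 'a \<Rightarrow> 'a \<Rightarrow> bool" where
  "is_walk V E p x y \<longleftrightarrow> p \<noteq> [] \<and> hd p = x \<and> last p = y \<and> set p \<subseteq> V \<and>
     (\<forall>i. Suc i < length p \<longrightarrow> E (p ! i) (p ! Suc i))"

text \<open>Shortest-path distance (graphs considered here are connected).\<close>
definition gdist :: "'a set \<Rightarrow> ('a \<Rightarrow> 'a \<Rightarrow> bool) \<Rightarrow> 'a \<Rightarrow> 'a \<Rightarrow> nat" where
  "gdist V E x y = (LEAST k. \<exists>p. is_walk V E p x y \<and> length p = Suc k)"

definition setdist :: "'a set \<Rightarrow> ('a \<Rightarrow> 'a \<Rightarrow> bool) \<Rightarrow> 'a \<Rightarrow> 'a set \<Rightarrow> nat" where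
  "setdist V E v Q = Min (gdist V E v ` Q)"

definition ordered_partition :: "'a set \<Rightarrow> 'a set list \<Rightarrow> bool" where
  "ordered_partition V Qs \<longleftrightarrow> (\<forall>Q\<in>set Qs. Q \<noteq> {}) \<and>
     (\<forall>i<length Qs. \<forall>j<length Qs. i \<noteq> j \<longrightarrow> Qs ! i \<inter> Qs ! j = {}) \<and> \<Union>(set Qs) = V"

definition representation :: "'a set \<Rightarrow> ('a \<Rightarrow> 'a \<Rightarrow> bool) \<Rightarrow> 'a set list \<Rightarrow> 'a \<Rightarrow> nat list" where
  "representation V E Qs v = map (setdist V E v) Qs"

definition resolving_partition :: "'a set \<Rightarrow> ('a \<Rightarrow> 'a \<Rightarrow> bool) \<Rightarrow> 'a set list \<Rightarrow> bool" where
  "resolving_partition V E Qs \<longleftrightarrow> ordered_partition V Qs \<and> inj_on (representation V E Qs) V"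

definition partition_dimension :: "'a set \<Rightarrow> ('a \<Rightarrow> 'a \<Rightarrow> bool) \<Rightarrow> nat" where
  "partition_dimension V E = (LEAST k. \<exists>Qs. length Qs = k \<and> resolving_partition V E Qs)"

text \<open>The cycles are given by the list ns = [n_1,...,n_m] (0-indexed: cycle i has length ns!i).
  Vertex v^i_j (1-indexed j) is represented by the pair (i, j-1).  The vertex v^{i+1}_1,
  i.e. the pair (i+1, 0), is identified with v^i_{n_i/2+1}, i.e. the pair (i, n_i div 2);
  canon maps each pair to its class representative.\<close>
definition canon :: "nat list \<Rightarrow> nat \<times> nat \<Rightarrow> nat \<times> nat" where
  "canon ns v = (case v of (i, j) \<Rightarrow>
     if 0 < i \<and> j = 0 then (i - 1, ns ! (i - 1) div 2) else (i, j))"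

definition chain_V :: "nat list \<Rightarrow> (nat \<times> nat) set" where
  "chain_V ns = {canon ns (i, j) | i j. i < length ns \<and> j < ns ! i}"

definition chain_E :: "nat list \<Rightarrow> nat \<times> nat \<Rightarrow> nat \<times> nat \<Rightarrow> bool" where
  "chain_E ns x y \<longleftrightarrow> (\<exists>i j. i < length ns \<and> j < ns ! i \<and>
     ((x = canon ns (i, j) \<and> y = canon ns (i, Suc j mod ns ! i)) \<or>
      (y = canon ns (i, j) \<and> x = canon ns (i, Suc j mod ns ! i))))"

end

theory Submission
  imports Defs
begin

text \<open>
  Lower bound: if \<open>[A, B]\<close> is a resolving partition of a connected graph and \<open>w \<in> A\<close>, every
  neighbour of \<open>w\<close> has representation \<open>(0, d - 1)\<close>, \<open>(0, d + 1)\<close> or \<open>(1, 0)\<close> with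
  \<open>d = d(w, B)\<close>, so \<open>w\<close> has degree at most three; but the vertex where the first two cycles
  are glued has degree four.

  Upper bound: take the classes \<open>{v\<^sup>1\<^sub>1}\<close>, the vertices strictly inside the first half of their
  cycle, and all remaining vertices. The class \<open>{v\<^sup>1\<^sub>1}\<close> records the distance to \<open>v\<^sup>1\<^sub>1\<close>, and
  this distance is injective on each of the two other classes.
\<close>

definition connected_graph :: "'a set \<Rightarrow> ('a \<Rightarrow> 'a \<Rightarrow> bool) \<Rightarrow> bool" where
  "connected_graph V E \<longleftrightarrow> (\<forall>a\<in>V. \<forall>b\<in>V. \<exists>p. is_walk V E p a b)"

lemma is_walk_singleton: "is_walk V E [a] x y \<longleftrightarrow> a = x \<and> a = y \<and> a \<in> V"
  by (auto simp: is_walk_def)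

lemma is_walk_Cons_Cons:
  "is_walk V E (a # b # p) x y \<longleftrightarrow> a = x \<and> a \<in> V \<and> E a b \<and> is_walk V E (b # p) b y"
proof -
  have "(\<forall>i. Suc i < length (a # b # p) \<longrightarrow> E ((a # b # p) ! i) ((a # b # p) ! Suc i)) \<longleftrightarrow>
        E a b \<and> (\<forall>i. Suc i < length (b # p) \<longrightarrow> E ((b # p) ! i) ((b # p) ! Suc i))"
    (is "?l \<longleftrightarrow> ?r")
  proof
    assume ?l
    then show ?r by (metis Suc_less_eq length_Cons nth_Cons_0 nth_Cons_Suc zero_less_Suc)
  next
    assume ?r
    show ?l
    proof (intro allI impI)
      fix i assume "Suc i < length (a # b # p)"
      with \<open>?r\<close> show "E ((a # b # p) ! i) ((a # b # p) ! Suc i)" by (cases i) auto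
    qed
  qed
  then show ?thesis by (auto simp: is_walk_def)
qed

lemma is_walk_Cons: "is_walk V E p w y \<Longrightarrow> u \<in> V \<Longrightarrow> E u w \<Longrightarrow> is_walk V E (u # p) u y"
  by (cases p) (auto simp: is_walk_Cons_Cons, auto simp: is_walk_def)

lemma is_walk_snoc: "is_walk V E p x y \<Longrightarrow> E y z \<Longrightarrow> z \<in> V \<Longrightarrow> is_walk V E (p @ [z]) x z"
proof (induction p arbitrary: x rule: induct_list012)
  case (2 a)
  then show ?case by (auto simp add: is_walk_Cons_Cons is_walk_singleton)
next
  case (3 a b p)
  then have "a = x" "a \<in> V" "E a b" "is_walk V E (b # p) b y" by (auto simp: is_walk_Cons_Cons)
  with 3 show ?case by (auto simp: is_walk_Cons_Cons)
qed (simp add: is_walk_def)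

lemma le_along_walk:
  assumes "is_walk V E p x y" and "\<And>a b. E a b \<Longrightarrow> f a \<le> f b + (1::nat)"
  shows "f x \<le> f y + (length p - 1)"
  using assms(1)
proof (induction p arbitrary: x rule: induct_list012)
  case (2 a)
  then show ?case by (auto simp add: is_walk_singleton)
next
  case (3 a b p)
  then have "a = x" "E a b" "is_walk V E (b # p) b y" by (auto simp: is_walk_Cons_Cons)
  with 3 assms(2)[of a b] show ?case by fastforce
qed (simp add: is_walk_def)

lemma gdist_le_walk: "is_walk V E p x y \<Longrightarrow> gdist V E x y \<le> length p - 1"
  unfolding gdist_def
  by (rule Least_le) (metis One_nat_def Suc_pred is_walk_def length_greater_0_conv)

lemma shortest_walk_exists:
  "is_walk V E p x y \<Longrightarrow> \<exists>q. is_walk V E q x y \<and> length q = Suc (gdist V E x y)"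
  unfolding gdist_def
  by (rule LeastI_ex) (metis One_nat_def Suc_pred is_walk_def length_greater_0_conv)

lemma gdist_self: "x \<in> V \<Longrightarrow> gdist V E x x = 0"
  using gdist_le_walk[of V E "[x]" x x] by (simp add: is_walk_singleton)

lemma gdist_eq_0_imp_eq: "is_walk V E p x y \<Longrightarrow> gdist V E x y = 0 \<Longrightarrow> x = y"
  using shortest_walk_exists[of V E p x y] by (auto simp: is_walk_def length_Suc_conv)

lemma gdist_edge_le:
  assumes "is_walk V E p w y" "u \<in> V" "E u w"
  shows "gdist V E u y \<le> gdist V E w y + 1"
proof -
  obtain q where q: "is_walk V E q w y" "length q = Suc (gdist V E w y)"
    using shortest_walk_exists[OF assms(1)] by blast
  then show ?thesis using gdist_le_walk[OF is_walk_Cons[OF q(1) assms(2,3)]] by simp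
qed

lemma setdist_le: "finite Q \<Longrightarrow> q \<in> Q \<Longrightarrow> setdist V E v Q \<le> gdist V E v q"
  unfolding setdist_def by (rule Min_le) auto

lemma setdist_attained: "finite Q \<Longrightarrow> Q \<noteq> {} \<Longrightarrow> \<exists>q\<in>Q. setdist V E v Q = gdist V E v q"
proof -
  assume "finite Q" "Q \<noteq> {}"
  then have "Min (gdist V E v ` Q) \<in> gdist V E v ` Q" by (intro Min_in) auto
  then show ?thesis unfolding setdist_def by auto
qed

lemma setdist_eq_0_iff:
  assumes "connected_graph V E" "finite Q" "Q \<subseteq> V" "Q \<noteq> {}" "v \<in> V"
  shows "setdist V E v Q = 0 \<longleftrightarrow> v \<in> Q"
proof
  assume 0: "setdist V E v Q = 0"
  obtain q where q: "q \<in> Q" "setdist V E v Q = gdist V E v q"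
    using setdist_attained[OF assms(2,4)] by blast
  moreover obtain p where "is_walk V E p v q"
    using assms(1,3,5) q(1) unfolding connected_graph_def by blast
  ultimately have "v = q" using gdist_eq_0_imp_eq 0 by metis
  with q(1) show "v \<in> Q" by simp
next
  assume "v \<in> Q"
  then have "setdist V E v Q \<le> gdist V E v v" by (rule setdist_le[OF assms(2)])
  then show "setdist V E v Q = 0" using gdist_self[OF assms(5)] by simp
qed

lemma setdist_edge_le:
  assumes "connected_graph V E" "finite Q" "Q \<subseteq> V" "Q \<noteq> {}" "u \<in> V" "w \<in> V" "E u w"
  shows "setdist V E u Q \<le> setdist V E w Q + 1"
proof -
  obtain q where q: "q \<in> Q" "setdist V E w Q = gdist V E w q"
    using setdist_attained[OF assms(2,4)] by blast
  then obtain p where p: "is_walk V E p w q"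
    using assms(1,3,6) unfolding connected_graph_def by blast
  have "setdist V E u Q \<le> gdist V E u q" using setdist_le[OF assms(2) q(1)] .
  also have "\<dots> \<le> gdist V E w q + 1" using gdist_edge_le[OF p assms(5,7)] .
  finally show ?thesis using q(2) by simp
qed

subsection \<open>Resolving partitions with two classes\<close>

lemma resolving_partition_swap:
  "resolving_partition V E [A, B] \<Longrightarrow> resolving_partition V E [B, A]"
  unfolding resolving_partition_def ordered_partition_def representation_def inj_on_def
  by (auto simp: less_Suc_eq)

lemma resolving_2_partition_classes:
  assumes "resolving_partition V E [A, B]" "finite V"
  shows "A \<union> B = V" "A \<noteq> {}" "B \<noteq> {}" "finite A" "finite B"
    "inj_on (\<lambda>u. (setdist V E u A, setdist V E u B)) V"
proof -
  have op: "ordered_partition V [A, B]" and inj: "inj_on (representation V E [A, B]) V"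
    using assms(1) unfolding resolving_partition_def by auto
  show un: "A \<union> B = V" "A \<noteq> {}" "B \<noteq> {}" using op unfolding ordered_partition_def by auto
  show "finite A" "finite B" using un(1) assms(2) by (auto intro: finite_subset)
  show "inj_on (\<lambda>u. (setdist V E u A, setdist V E u B)) V"
    using inj unfolding inj_on_def representation_def by auto
qed

lemma resolving_2_partition_neighbour:
  assumes conn: "connected_graph V E" and fin: "finite V"
    and res: "resolving_partition V E [A, B]"
    and wA: "w \<in> A" and uV: "u \<in> V" and edges: "E u w" "E w u" and "u \<noteq> w"
  shows "(setdist V E u A, setdist V E u B) \<in>
     {(0, setdist V E w B - 1), (0, setdist V E w B + 1), (1, 0)}"
proof -
  note AB = resolving_2_partition_classes[OF res fin]
  have AV: "A \<subseteq> V" and BV: "B \<subseteq> V" and wV: "w \<in> V" using AB(1) wA by auto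
  note zeroA = setdist_eq_0_iff[OF conn AB(4) AV AB(2)]
    and zeroB = setdist_eq_0_iff[OF conn AB(5) BV AB(3)]
  have wA0: "setdist V E w A = 0" using zeroA[OF wV] wA by simp
  show ?thesis
  proof (cases "u \<in> A")
    case True
    then have uA0: "setdist V E u A = 0" using zeroA[OF uV] by simp
    have "setdist V E u B \<le> setdist V E w B + 1" "setdist V E w B \<le> setdist V E u B + 1"
      using setdist_edge_le[OF conn AB(5) BV AB(3)] uV wV edges by auto
    moreover have "setdist V E u B \<noteq> setdist V E w B"
      using inj_onD[OF AB(6) _ uV wV] uA0 wA0 \<open>u \<noteq> w\<close> by auto
    ultimately show ?thesis using uA0 by auto
  next
    case False
    then have "setdist V E u B = 0" "setdist V E u A \<noteq> 0"
      using zeroA[OF uV] zeroB[OF uV] AB(1) uV by auto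
    moreover have "setdist V E u A \<le> setdist V E w A + 1"
      using setdist_edge_le[OF conn AB(4) AV AB(2) uV wV edges(1)] .
    ultimately show ?thesis using wA0 by auto
  qed
qed

lemma resolving_2_partition_degree_le_3:
  assumes conn: "connected_graph V E" and fin: "finite V"
    and res: "resolving_partition V E [A, B]"
    and w: "w \<in> V" and U: "U \<subseteq> {u \<in> V. E u w \<and> E w u \<and> u \<noteq> w}"
  shows "card U \<le> 3"
proof -
  have "card U \<le> 3" if res: "resolving_partition V E [A, B]" and "w \<in> A" for A B
  proof -
    let ?r = "\<lambda>u. (setdist V E u A, setdist V E u B)"
    let ?T = "{(0, setdist V E w B - 1), (0, setdist V E w B + 1), (1::nat, 0::nat)}"
    have "inj_on ?r U"
      using resolving_2_partition_classes(6)[OF res fin] U by (auto intro: inj_on_subset)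
    then have "card U = card (?r ` U)" by (simp add: card_image)
    also have "\<dots> \<le> card ?T"
    proof (rule card_mono)
      show "?r ` U \<subseteq> ?T"
        using resolving_2_partition_neighbour[OF conn fin res \<open>w \<in> A\<close>] U by blast
    qed simp
    also have "\<dots> \<le> 3" by (auto simp: card_insert_if)
    finally show ?thesis .
  qed
  moreover have "w \<in> A \<or> w \<in> B" using resolving_2_partition_classes(1)[OF res fin] w by auto
  ultimately show ?thesis using res resolving_partition_swap by blast
qed

lemma resolving_partition_length_ge_3:
  assumes conn: "connected_graph V E" and fin: "finite V"
    and w: "w \<in> V" and U: "U \<subseteq> {u \<in> V. E u w \<and> E w u \<and> u \<noteq> w}" "card U = 4"
    and res: "resolving_partition V E Qs"
  shows "3 \<le> length Qs"
proof (rule ccontr)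
  assume "\<not> 3 \<le> length Qs"
  then consider "Qs = []" | Q where "Qs = [Q]" | A B where "Qs = [A, B]"
    by (cases Qs rule: remdups_adj.cases) (auto simp: not_less_eq_eq)
  then show False
  proof cases
    case 1
    then show False using res w unfolding resolving_partition_def ordered_partition_def by simp
  next
    case (2 Q)
    then have QV: "Q = V" using res unfolding resolving_partition_def ordered_partition_def by simp
    obtain u where u: "u \<in> U" using U(2) by fastforce
    then have uV: "u \<in> V" and "u \<noteq> w" using U(1) by auto
    have "representation V E Qs v = [0]" if "v \<in> V" for v
      using setdist_eq_0_iff[OF conn fin subset_refl _ that] w that
      unfolding representation_def 2 QV by auto
    then have "representation V E Qs u = representation V E Qs w" using uV w by simp
    then show False
      using inj_onD[OF _ _ uV w] res \<open>u \<noteq> w\<close> unfolding resolving_partition_def by blast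
  next
    case (3 A B)
    then show False
      using resolving_2_partition_degree_le_3[OF conn fin _ w U(1)] res U(2) by simp
  qed
qed

subsection \<open>The even chain cycle\<close>

text \<open>The root \<open>(0, 0)\<close> is \<open>v\<^sup>1\<^sub>1\<close>; cycle \<open>i\<close> is entered at distance \<open>chain_offset ns i\<close> from it.\<close>
definition chain_offset :: "nat list \<Rightarrow> nat \<Rightarrow> nat" where
  "chain_offset ns i = (\<Sum>k<i. ns ! k div 2)"

definition root_dist :: "nat list \<Rightarrow> nat \<times> nat \<Rightarrow> nat" where
  "root_dist ns v = chain_offset ns (fst v) + min (snd v) (ns ! fst v - snd v)"

definition front_half :: "nat list \<Rightarrow> (nat \<times> nat) set" where
  "front_half ns = {v \<in> chain_V ns. 0 < snd v \<and> snd v < ns ! fst v div 2}"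

definition back_half :: "nat list \<Rightarrow> (nat \<times> nat) set" where
  "back_half ns = {v \<in> chain_V ns. v \<noteq> (0, 0) \<and> \<not> (0 < snd v \<and> snd v < ns ! fst v div 2)}"

lemma chain_offset_Suc: "chain_offset ns (Suc i) = chain_offset ns i + ns ! i div 2"
  by (simp add: chain_offset_def)

lemma chain_offset_mono: "i \<le> i' \<Longrightarrow> chain_offset ns i \<le> chain_offset ns i'"
  unfolding chain_offset_def by (rule sum_mono2) auto

lemma chain_offset_interval_unique:
  assumes "chain_offset ns i < d" "d \<le> chain_offset ns (Suc i)"
    and "chain_offset ns i' < d" "d \<le> chain_offset ns (Suc i')"
  shows "i = i'"
  using assms chain_offset_mono[of "Suc i" i' ns] chain_offset_mono[of "Suc i'" i ns]
  by (cases i i' rule: linorder_cases) auto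

lemma finite_chain_V: "finite (chain_V ns)"
proof -
  have "chain_V ns = canon ns ` (SIGMA i:{..<length ns}. {..<ns ! i})"
    unfolding chain_V_def by auto
  then show ?thesis by simp
qed

lemma chain_E_sym: "chain_E ns a b \<Longrightarrow> chain_E ns b a"
  unfolding chain_E_def by blast

lemma canon_in_chain_V: "i < length ns \<Longrightarrow> j < ns ! i \<Longrightarrow> canon ns (i, j) \<in> chain_V ns"
  unfolding chain_V_def by blast

lemma chain_E_in_chain_V: "chain_E ns a b \<Longrightarrow> a \<in> chain_V ns \<and> b \<in> chain_V ns"
  unfolding chain_E_def by (metis canon_in_chain_V mod_less_divisor zero_less_iff_neq_zero
    not_less_zero)

lemma canon_id: "i = 0 \<or> j \<noteq> 0 \<Longrightarrow> canon ns (i, j) = (i, j)"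
  unfolding canon_def by auto

lemma min_dist_on_cycle_step:
  "j < (n::nat) \<Longrightarrow> min j (n - j) \<le> min (Suc j mod n) (n - Suc j mod n) + 1
    \<and> min (Suc j mod n) (n - Suc j mod n) \<le> min j (n - j) + 1"
proof (cases "Suc j < n")
  case False
  moreover assume "j < n"
  ultimately have "Suc j = n" by simp
  then show ?thesis by (auto simp: min_def)
qed (auto simp: min_def)

context
  fixes ns :: "nat list"
  assumes cycles_even: "\<forall>n\<in>set ns. even n \<and> n \<ge> 4"
begin

lemma cycle_even: "i < length ns \<Longrightarrow> even (ns ! i) \<and> ns ! i \<ge> 4"
  using cycles_even nth_mem by blast

lemma chain_V_iff:
  "v \<in> chain_V ns \<longleftrightarrow> fst v < length ns \<and> snd v < ns ! fst v \<and> (fst v = 0 \<or> snd v \<noteq> 0)"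
proof
  assume "v \<in> chain_V ns"
  then obtain i j where ij: "v = canon ns (i, j)" "i < length ns" "j < ns ! i"
    unfolding chain_V_def by blast
  show "fst v < length ns \<and> snd v < ns ! fst v \<and> (fst v = 0 \<or> snd v \<noteq> 0)"
  proof (cases "0 < i \<and> j = 0")
    case True
    then have "v = (i - 1, ns ! (i - 1) div 2)" using ij(1) unfolding canon_def by simp
    moreover have "even (ns ! (i - 1)) \<and> ns ! (i - 1) \<ge> 4" using cycle_even ij(2) by simp
    ultimately show ?thesis using ij(2) by auto
  next
    case False
    then show ?thesis using ij canon_id by auto
  qed
next
  assume "fst v < length ns \<and> snd v < ns ! fst v \<and> (fst v = 0 \<or> snd v \<noteq> 0)"
  then show "v \<in> chain_V ns"
    using canon_in_chain_V[where ns = ns and i = "fst v" and j = "snd v"]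
      canon_id[where i = "fst v" and j = "snd v" and ns = ns] by simp
qed

lemma root_in_chain_V: "ns \<noteq> [] \<Longrightarrow> (0, 0) \<in> chain_V ns"
  using chain_V_iff cycle_even by fastforce

lemma root_dist_root: "root_dist ns (0, 0) = 0"
  unfolding root_dist_def chain_offset_def by simp

lemma root_dist_canon: "i < length ns \<Longrightarrow> root_dist ns (canon ns (i, j)) = root_dist ns (i, j)"
  using cycle_even[of "i - 1"] chain_offset_Suc[of ns "i - 1"]
  by (auto simp: canon_def root_dist_def)

lemma root_dist_edge_le: "chain_E ns a b \<Longrightarrow> root_dist ns a \<le> root_dist ns b + 1"
  unfolding chain_E_def
  using root_dist_canon min_dist_on_cycle_step by (fastforce simp: root_dist_def)

lemma root_dist_descent:
  assumes vV: "v \<in> chain_V ns" and "v \<noteq> (0, 0)"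
  shows "\<exists>u\<in>chain_V ns. chain_E ns v u \<and> root_dist ns u + 1 = root_dist ns v"
proof -
  obtain i j where v: "v = (i, j)" by (cases v)
  have h: "i < length ns" "j < ns ! i" "1 \<le> j"
    using vV assms(2) chain_V_iff v by auto
  define n where "n = ns ! i"
  have n: "even n" "n \<ge> 4" using cycle_even[OF h(1)] n_def by auto
  have cv: "canon ns (i, j) = v" using canon_id h(3) v by simp
  have dv: "root_dist ns v = chain_offset ns i + min j (n - j)" using v n_def root_dist_def by simp
  show ?thesis
  proof (cases "j \<le> n div 2")
    case True
    define u where "u = canon ns (i, j - 1)"
    have "Suc (j - 1) mod n = j" using h n_def by simp
    then have "chain_E ns v u" unfolding chain_E_def u_def
      using h cv n_def by (metis diff_less less_imp_diff_less zero_less_one)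
    moreover have "root_dist ns u = chain_offset ns i + (j - 1)"
      using root_dist_canon[OF h(1)] u_def True n_def unfolding root_dist_def by auto
    ultimately show ?thesis using chain_E_in_chain_V h dv True by fastforce
  next
    case False
    define u where "u = canon ns (i, Suc j mod n)"
    have "chain_E ns v u" unfolding chain_E_def using h cv u_def n_def by blast
    moreover have "root_dist ns u = chain_offset ns i + (n - j - 1)"
    proof (cases "Suc j < n")
      case True
      then show ?thesis using root_dist_canon[OF h(1)] u_def False n_def by (auto simp: root_dist_def)
    next
      case False
      then have "Suc j = n" using h(2) n_def by simp
      then show ?thesis using root_dist_canon[OF h(1)] u_def n_def by (auto simp: root_dist_def)
    qed
    ultimately show ?thesis using chain_E_in_chain_V False h(2) dv n_def by fastforce
  qed
qed

lemma root_dist_eq_0_iff: "v \<in> chain_V ns \<Longrightarrow> root_dist ns v = 0 \<longleftrightarrow> v = (0, 0)"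
  using root_dist_descent root_dist_root by fastforce

lemma walk_to_root:
  assumes "ns \<noteq> []" "v \<in> chain_V ns"
  shows "\<exists>p. is_walk (chain_V ns) (chain_E ns) p v (0, 0) \<and> length p = Suc (root_dist ns v)"
  using assms(2)
proof (induction "root_dist ns v" arbitrary: v)
  case 0
  then have "v = (0, 0)" using root_dist_eq_0_iff by simp
  then show ?case using root_in_chain_V[OF assms(1)]
    by (intro exI[of _ "[v]"]) (simp add: is_walk_singleton root_dist_root)
next
  case (Suc k)
  then have "v \<noteq> (0, 0)" using root_dist_root by auto
  then obtain u where u: "u \<in> chain_V ns" "chain_E ns v u" "root_dist ns u + 1 = root_dist ns v"
    using root_dist_descent Suc.prems by blast
  then have "k = root_dist ns u" using Suc.hyps(2) by simp
  then obtain p where p: "is_walk (chain_V ns) (chain_E ns) p u (0, 0)" "length p = Suc (root_dist ns u)"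
    using Suc.hyps(1) u(1) by blast
  show ?case
    using is_walk_Cons[OF p(1) Suc.prems u(2)] p(2) u(3) by (intro exI[of _ "v # p"]) simp
qed

lemma connected_chain: "ns \<noteq> [] \<Longrightarrow> connected_graph (chain_V ns) (chain_E ns)"
proof -
  assume ne: "ns \<noteq> []"
  have "\<exists>p. is_walk (chain_V ns) (chain_E ns) p a b"
    if a: "a \<in> chain_V ns" and b: "b \<in> chain_V ns" for a b
    using b
  proof (induction "root_dist ns b" arbitrary: b)
    case 0
    then have "b = (0, 0)" using root_dist_eq_0_iff by simp
    then show ?case using walk_to_root[OF ne a] by blast
  next
    case (Suc k)
    then have "b \<noteq> (0, 0)" using root_dist_root by auto
    then obtain u where u: "u \<in> chain_V ns" "chain_E ns b u" "root_dist ns u + 1 = root_dist ns b"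
      using root_dist_descent Suc.prems by blast
    then have "k = root_dist ns u" using Suc.hyps(2) by simp
    then obtain p where "is_walk (chain_V ns) (chain_E ns) p a u"
      using Suc.hyps(1) u(1) by blast
    from is_walk_snoc[OF this chain_E_sym[OF u(2)] Suc.prems] show ?case by blast
  qed
  then show ?thesis unfolding connected_graph_def by blast
qed

lemma gdist_root:
  assumes "ns \<noteq> []" "v \<in> chain_V ns"
  shows "gdist (chain_V ns) (chain_E ns) v (0, 0) = root_dist ns v"
proof -
  obtain p where p: "is_walk (chain_V ns) (chain_E ns) p v (0, 0)" "length p = Suc (root_dist ns v)"
    using walk_to_root[OF assms] by blast
  obtain q where q: "is_walk (chain_V ns) (chain_E ns) q v (0, 0)"
    "length q = Suc (gdist (chain_V ns) (chain_E ns) v (0, 0))"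
    using shortest_walk_exists[OF p(1)] by blast
  have "root_dist ns v \<le> length q - 1"
    using le_along_walk[OF q(1), of "root_dist ns"] root_dist_edge_le root_dist_root by simp
  then show ?thesis using gdist_le_walk[OF p(1)] p(2) q(2) by simp
qed

lemma front_half_root_dist:
  "u \<in> front_half ns \<Longrightarrow> chain_offset ns (fst u) < root_dist ns u
     \<and> root_dist ns u \<le> chain_offset ns (Suc (fst u)) \<and> root_dist ns u = chain_offset ns (fst u) + snd u"
  unfolding front_half_def root_dist_def chain_offset_Suc by auto

lemma back_half_root_dist:
  assumes "u \<in> back_half ns"
  shows "chain_offset ns (fst u) < root_dist ns u \<and> root_dist ns u \<le> chain_offset ns (Suc (fst u))
     \<and> root_dist ns u = chain_offset ns (fst u) + (ns ! fst u - snd u)"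
proof -
  have u: "fst u < length ns" "snd u < ns ! fst u" "snd u \<noteq> 0" "ns ! fst u div 2 \<le> snd u"
    using assms chain_V_iff unfolding back_half_def by (auto simp: prod_eq_iff)
  then show ?thesis using cycle_even[OF u(1)] unfolding root_dist_def chain_offset_Suc by auto
qed

lemma inj_on_root_dist_front_half: "inj_on (root_dist ns) (front_half ns)"
proof (rule inj_onI)
  fix u v assume "u \<in> front_half ns" "v \<in> front_half ns" "root_dist ns u = root_dist ns v"
  with front_half_root_dist[of u] front_half_root_dist[of v] show "u = v"
    using chain_offset_interval_unique by (metis prod_eq_iff add_left_cancel)
qed

lemma inj_on_root_dist_back_half: "inj_on (root_dist ns) (back_half ns)"
proof (rule inj_onI)
  fix u v assume uv: "u \<in> back_half ns" "v \<in> back_half ns" "root_dist ns u = root_dist ns v"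
  then have "snd u < ns ! fst u" "snd v < ns ! fst v"
    using chain_V_iff unfolding back_half_def by auto
  moreover have "fst u = fst v"
    using uv back_half_root_dist[of u] back_half_root_dist[of v] chain_offset_interval_unique by metis
  moreover have "ns ! fst u - snd u = ns ! fst v - snd v"
    using uv back_half_root_dist[of u] back_half_root_dist[of v] calculation(3) by simp
  ultimately show "u = v" by (simp add: prod_eq_iff)
qed

lemma resolving_partition_chain:
  assumes ne: "ns \<noteq> []"
  shows "resolving_partition (chain_V ns) (chain_E ns) [front_half ns, back_half ns, {(0, 0)}]"
    (is "resolving_partition ?V ?E ?Qs")
proof -
  have n0: "even (ns ! 0)" "ns ! 0 \<ge> 4" using cycle_even ne by auto
  have front: "(0, 1) \<in> front_half ns" and back_root: "(0, ns ! 0 div 2) \<in> back_half ns"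
    unfolding front_half_def back_half_def using chain_V_iff ne n0 by auto
  have subsets: "front_half ns \<subseteq> ?V" "back_half ns \<subseteq> ?V"
    unfolding front_half_def back_half_def by auto
  have "ordered_partition ?V ?Qs"
    unfolding ordered_partition_def
  proof (intro conjI allI impI)
    show "\<forall>Q\<in>set ?Qs. Q \<noteq> {}" using front back_root by auto
    show "\<Union> (set ?Qs) = ?V"
      using root_in_chain_V[OF ne] subsets by (auto simp: front_half_def back_half_def)
    fix i j assume "i < length ?Qs" "j < length ?Qs" "i \<noteq> j"
    then show "?Qs ! i \<inter> ?Qs ! j = {}"
      by (auto simp: less_Suc_eq numeral_3_eq_3 front_half_def back_half_def)
  qed
  moreover have "inj_on (representation ?V ?E ?Qs) ?V"
  proof (rule inj_onI)
    fix u v assume uv: "u \<in> ?V" "v \<in> ?V" "representation ?V ?E ?Qs u = representation ?V ?E ?Qs v"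
    have same_dist: "setdist ?V ?E u Q = setdist ?V ?E v Q" if "Q \<in> set ?Qs" for Q
      using uv(3) that unfolding representation_def by auto
    note zero = setdist_eq_0_iff[OF connected_chain[OF ne] finite_subset[OF _ finite_chain_V]]
    have "front_half ns \<noteq> {}" "back_half ns \<noteq> {}" using front back_root by blast+
    note zero_front = zero[OF subsets(1) subsets(1) this(1)]
      and zero_back = zero[OF subsets(2) subsets(2) this(2)]
    have same_front: "u \<in> front_half ns \<longleftrightarrow> v \<in> front_half ns"
      using zero_front[OF uv(1)] zero_front[OF uv(2)] same_dist[of "front_half ns"] by simp
    have same_back: "u \<in> back_half ns \<longleftrightarrow> v \<in> back_half ns"
      using zero_back[OF uv(1)] zero_back[OF uv(2)] same_dist[of "back_half ns"] by simp
    have same_root_dist: "root_dist ns u = root_dist ns v"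
      using same_dist[of "{(0, 0)}"] gdist_root[OF ne] uv(1,2) by (simp add: setdist_def)
    consider "u \<in> front_half ns" | "u \<in> back_half ns" | "u = (0, 0)"
      using uv(1) unfolding front_half_def back_half_def by blast
    then show "u = v"
    proof cases
      case 1
      then show ?thesis
        using same_front inj_onD[OF inj_on_root_dist_front_half same_root_dist] by blast
    next
      case 2
      then show ?thesis
        using same_back inj_onD[OF inj_on_root_dist_back_half same_root_dist] by blast
    next
      case 3
      then show ?thesis
        using same_root_dist root_dist_root root_dist_eq_0_iff[OF uv(2)] by simp
    qed
  qed
  ultimately show ?thesis unfolding resolving_partition_def by blast
qed

lemma chain_junction_degree_4:
  assumes "1 < length ns"
  defines "w \<equiv> (0, ns ! 0 div 2)"
  shows "w \<in> chain_V ns \<and> (\<exists>U. U \<subseteq> {u \<in> chain_V ns. chain_E ns u w \<and> chain_E ns w u \<and> u \<noteq> w}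
           \<and> card U = 4)"
proof -
  let ?h = "ns ! 0 div 2"
  have n0: "even (ns ! 0)" "ns ! 0 \<ge> 4" and n1: "even (ns ! 1)" "ns ! 1 \<ge> 4"
    using cycle_even[of 0] cycle_even[of 1] assms(1) by (auto simp del: length_greater_0_conv)
  have w10: "canon ns (1, 0) = w" unfolding canon_def w_def by simp
  have edges: "chain_E ns (0, ?h - 1) w" "chain_E ns w (0, Suc ?h)"
    "chain_E ns w (1, 1)" "chain_E ns (1, ns ! 1 - 1) w"
  proof -
    show "chain_E ns (0, ?h - 1) w" unfolding chain_E_def w_def
      using n0 assms(1) by (intro exI[of _ 0] exI[of _ "?h - 1"]) (auto simp: canon_def)
    show "chain_E ns w (0, Suc ?h)" unfolding chain_E_def w_def
      using n0 assms(1) by (intro exI[of _ 0] exI[of _ ?h]) (auto simp: canon_def)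
    show "chain_E ns w (1, 1)" unfolding chain_E_def
      using n1 assms(1) w10 by (intro exI[of _ 1] exI[of _ 0]) (auto simp: canon_def)
    show "chain_E ns (1, ns ! 1 - 1) w" unfolding chain_E_def
      using n1 assms(1) w10 by (intro exI[of _ 1] exI[of _ "ns ! 1 - 1"]) (auto simp: canon_def)
  qed
  let ?U = "{(0::nat, ?h - 1), (0, Suc ?h), (1, 1), (1, ns ! 1 - 1)}"
  have "?U \<subseteq> {u \<in> chain_V ns. chain_E ns u w \<and> chain_E ns w u \<and> u \<noteq> w}"
    using edges chain_E_sym chain_E_in_chain_V n0 unfolding w_def by auto
  moreover have "card ?U = 4" using n0 n1 by (auto simp: card_insert_if)
  moreover have "w \<in> chain_V ns" using chain_E_in_chain_V[OF edges(2)] by blast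
  ultimately show ?thesis by blast
qed

end

theorem theorem2p3:
  fixes ns :: "nat list"
  assumes "length ns \<ge> 2"
    and "\<forall>n\<in>set ns. even n \<and> n \<ge> 4"
  shows "partition_dimension (chain_V ns) (chain_E ns) = 3"
  unfolding partition_dimension_def
proof (rule Least_equality)
  have ne: "ns \<noteq> []" and two: "1 < length ns" using assms(1) by auto
  show "\<exists>Qs. length Qs = 3 \<and> resolving_partition (chain_V ns) (chain_E ns) Qs"
    using resolving_partition_chain[OF assms(2) ne] by (intro exI) auto
  fix k assume "\<exists>Qs. length Qs = k \<and> resolving_partition (chain_V ns) (chain_E ns) Qs"
  then obtain Qs where len: "length Qs = k" and res: "resolving_partition (chain_V ns) (chain_E ns) Qs"
    by blast
  obtain w U where w: "w \<in> chain_V ns" and U: "card U = 4"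
    "U \<subseteq> {u \<in> chain_V ns. chain_E ns u w \<and> chain_E ns w u \<and> u \<noteq> w}"
    using chain_junction_degree_4[OF assms(2) two] by blast
  show "3 \<le> k"
    using resolving_partition_length_ge_3[OF connected_chain[OF assms(2) ne] finite_chain_V w U(2,1) res]
      len by simp
qed

end
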